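(* Let $0<\beta\le1$. For every $\delta>0$ there exists an instance of $1\mid t_j\mid\sum C_j$ with obligatory tests on which $\beta$-SORT satisfies $\mathit{ALG}/\mathit{OPT}\ge\frac12\left(\sqrt{\frac{\beta+4}{\beta}}+1\right)-\delta$. In particular, the competitive ratio of $1$-SORT is at least the golden ratio $\frac{1+\sqrt5}{2}\approx1.618$.
   Context: Scheduling with obligatory tests: jobs $J=\{1,\dots,n\}$ on a single machine; job $j$ has a known test time $t_j\ge0$ and a processing time $p_j\ge0$ revealed only when its test has been executed. The test must be executed before the processing part (which may start any time later); operations are non-preemptive, one at a time. $C_j$ is the completion time of the processing part of $j$; objective $\sum_jC_j$. $\mathit{OPT}$ is the optimal offline objective value (all tests must also be executed); $\mathit{ALG}$ is the algorithm's value. Algorithm $\beta$-SORT (parameter $\beta>0$): maintain a priority queue of available operations, initially containing the test of every job $j$ with priority $\beta t_j$; repeatedly remove a minimum-priority operation and execute it immediately; after executing the test of $j$, insert the processing part of $j$ with priority $p_j$. *)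

theory Defs
  imports Complex_Main
begin

datatype operation = Test nat | Proc nat

definition valid_instance :: "nat \<Rightarrow> (nat \<Rightarrow> real) \<Rightarrow> (nat \<Rightarrow> real) \<Rightarrow> bool" where
  "valid_instance n t p \<longleftrightarrow> (\<forall>j<n. 0 \<le> t j \<and> 0 \<le> p j)"

definition ops :: "nat \<Rightarrow> operation set" where
  "ops n = {Test j | j. j < n} \<union> {Proc j | j. j < n}"

fun dur :: "(nat \<Rightarrow> real) \<Rightarrow> (nat \<Rightarrow> real) \<Rightarrow> operation \<Rightarrow> real" where
  "dur t p (Test j) = t j"
| "dur t p (Proc j) = p j"

fun is_proc :: "operation \<Rightarrow> bool" where
  "is_proc (Test j) = False"
| "is_proc (Proc j) = True"

definition feasible_schedule :: "nat \<Rightarrow> (nat \<Rightarrow> real) \<Rightarrow> (nat \<Rightarrow> real) \<Rightarrow> (operation \<Rightarrow> real) \<Rightarrow> bool" where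
  "feasible_schedule n t p S \<longleftrightarrow>
     (\<forall>a\<in>ops n. 0 \<le> S a) \<and>
     (\<forall>j<n. S (Test j) + t j \<le> S (Proc j)) \<and>
     (\<forall>a\<in>ops n. \<forall>b\<in>ops n. a \<noteq> b \<longrightarrow>
        S a + dur t p a \<le> S b \<or> S b + dur t p b \<le> S a)"

definition sched_cost :: "nat \<Rightarrow> (nat \<Rightarrow> real) \<Rightarrow> (operation \<Rightarrow> real) \<Rightarrow> real" where
  "sched_cost n p S = (\<Sum>j<n. S (Proc j) + p j)"

definition OPT :: "nat \<Rightarrow> (nat \<Rightarrow> real) \<Rightarrow> (nat \<Rightarrow> real) \<Rightarrow> real" where
  "OPT n t p = Inf {sched_cost n p S | S. feasible_schedule n t p S}"

fun prio :: "real \<Rightarrow> (nat \<Rightarrow> real) \<Rightarrow> (nat \<Rightarrow> real) \<Rightarrow> operation \<Rightarrow> real" where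
  "prio \<beta> t p (Test j) = \<beta> * t j"
| "prio \<beta> t p (Proc j) = p j"

definition avail :: "nat \<Rightarrow> operation list \<Rightarrow> operation set" where
  "avail n xs = {Test j | j. j < n \<and> Test j \<notin> set xs}
              \<union> {Proc j | j. j < n \<and> Test j \<in> set xs \<and> Proc j \<notin> set xs}"

text \<open>sigma is an execution order produced by beta-SORT (with some tie-breaking): at every
  step a minimum-priority available operation is executed.\<close>
definition sort_run :: "real \<Rightarrow> nat \<Rightarrow> (nat \<Rightarrow> real) \<Rightarrow> (nat \<Rightarrow> real) \<Rightarrow> operation list \<Rightarrow> bool" where
  "sort_run \<beta> n t p \<sigma> \<longleftrightarrow> length \<sigma> = 2 * n \<and>
     (\<forall>k < 2 * n. \<sigma> ! k \<in> avail n (take k \<sigma>) \<and>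
        (\<forall>b \<in> avail n (take k \<sigma>). prio \<beta> t p (\<sigma> ! k) \<le> prio \<beta> t p b))"

text \<open>Operations are executed immediately one after another starting at time 0, so the
  completion time of the k-th operation is the sum of durations of operations 0..k;
  ALG sums this over processing parts.\<close>
definition ALG :: "(nat \<Rightarrow> real) \<Rightarrow> (nat \<Rightarrow> real) \<Rightarrow> operation list \<Rightarrow> real" where
  "ALG t p \<sigma> = (\<Sum>k<length \<sigma>. if is_proc (\<sigma> ! k) then (\<Sum>i\<le>k. dur t p (\<sigma> ! i)) else 0)"

end

theory Submission
  imports Defs
begin

text \<open>
  Take N jobs with unit test time and M jobs with test time 0, all with the same processing
  time q slightly larger than \<beta>. Every test then has smaller priority than every processing
  part, so \<beta>-SORT runs all tests first and each processing part waits for all N units of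
  testing. The optimum instead runs the M zero-test jobs first and then the unit-test jobs one
  at a time. For K = N + M and q \<approx> \<beta> the two costs are about N K + \<beta> K^2 / 2 and
  (\<beta> K^2 + N^2) / 2, and with K \<approx> s N, where \<beta> s^2 = \<beta> s + 1, their ratio tends to s.
\<close>

lemma sum_lessThan_add: "sum f {..<(a::nat) + b} = sum f {..<a} + (\<Sum>i<b. f (a + i))"
  by (induction b) (auto simp: add.commute add.left_commute)

lemma gauss_sum_lessThan_real: "(\<Sum>i<n. real i + 1) = real n * (real n + 1) / 2"
  by (induction n) (auto simp: field_simps)

section \<open>Runs of \<beta>-SORT when every test precedes every processing part\<close>

lemma avail_not_executed:
  assumes "x \<in> avail n xs"
  shows "x \<notin> set xs \<and> (\<exists>j<n. x = Test j \<or> x = Proc j)"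
  using assms unfolding avail_def by auto

lemma sort_run_distinct:
  assumes "sort_run \<beta> n t p \<sigma>"
  shows "distinct \<sigma>"
proof -
  have len: "length \<sigma> = 2 * n" and av: "\<And>k. k < 2 * n \<Longrightarrow> \<sigma> ! k \<in> avail n (take k \<sigma>)"
    using assms unfolding sort_run_def by auto
  have "\<sigma> ! i \<noteq> \<sigma> ! k" if "i < k" "k < length \<sigma>" for i k
  proof -
    have "\<sigma> ! i \<in> set (take k \<sigma>)"
      using that by (auto simp: in_set_conv_nth intro!: exI[of _ i])
    moreover have "\<sigma> ! k \<notin> set (take k \<sigma>)"
      using avail_not_executed[OF av] that len by auto
    ultimately show ?thesis by auto
  qed
  then show ?thesis
    unfolding distinct_conv_nth by (metis linorder_neqE_nat)
qed

lemma sort_run_prefix_test: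
  assumes run: "sort_run \<beta> n t p \<sigma>" and gap: "\<forall>j<n. \<forall>j'<n. \<beta> * t j < p j'"
    and "k < n"
  shows "\<exists>j<n. \<sigma> ! k = Test j"
proof -
  have av: "\<sigma> ! k \<in> avail n (take k \<sigma>)"
    and least: "\<forall>b \<in> avail n (take k \<sigma>). prio \<beta> t p (\<sigma> ! k) \<le> prio \<beta> t p b"
    using run \<open>k < n\<close> unfolding sort_run_def by auto
  obtain j where j: "j < n" "\<sigma> ! k = Test j \<or> \<sigma> ! k = Proc j"
    using avail_not_executed[OF av] by auto
  have "\<not> Test ` {..<n} \<subseteq> set (take k \<sigma>)"
  proof
    assume "Test ` {..<n} \<subseteq> set (take k \<sigma>)"
    then have "card (Test ` {..<n}) \<le> length (take k \<sigma>)"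
      by (meson List.finite_set card_length card_mono order_trans)
    then show False
      using \<open>k < n\<close> by (simp add: card_image inj_on_def)
  qed
  then obtain j' where j': "j' < n" "Test j' \<notin> set (take k \<sigma>)" by auto
  then have "Test j' \<in> avail n (take k \<sigma>)" unfolding avail_def by auto
  with least have "prio \<beta> t p (\<sigma> ! k) \<le> \<beta> * t j'" by force
  then show ?thesis
    using gap j j' by (metis not_le prio.simps(2))
qed

lemma sort_run_prefix_image:
  assumes run: "sort_run \<beta> n t p \<sigma>" and gap: "\<forall>j<n. \<forall>j'<n. \<beta> * t j < p j'"
  shows "inj_on ((!) \<sigma>) {..<n}" and "(!) \<sigma> ` {..<n} = Test ` {..<n}"
proof -
  have len: "length \<sigma> = 2 * n" using run unfolding sort_run_def by simp
  show inj: "inj_on ((!) \<sigma>) {..<n}"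
    using sort_run_distinct[OF run] len by (auto simp: inj_on_def nth_eq_iff_index_eq)
  show "(!) \<sigma> ` {..<n} = Test ` {..<n}"
  proof (rule card_subset_eq)
    show "(!) \<sigma> ` {..<n} \<subseteq> Test ` {..<n}"
      using sort_run_prefix_test[OF run gap] by blast
    show "card ((!) \<sigma> ` {..<n}) = card (Test ` {..<n})"
      using inj by (simp add: card_image inj_on_def)
  qed simp
qed

lemma sort_run_suffix_proc:
  assumes run: "sort_run \<beta> n t p \<sigma>" and gap: "\<forall>j<n. \<forall>j'<n. \<beta> * t j < p j'"
    and "n \<le> k" and "k < 2 * n"
  shows "\<exists>j<n. \<sigma> ! k = Proc j"
proof -
  have len: "length \<sigma> = 2 * n" and "\<sigma> ! k \<in> avail n (take k \<sigma>)"
    using run \<open>k < 2 * n\<close> unfolding sort_run_def by auto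
  then obtain j where j: "j < n" "\<sigma> ! k = Test j \<or> \<sigma> ! k = Proc j"
    and fresh: "\<sigma> ! k \<notin> set (take k \<sigma>)"
    using avail_not_executed by blast
  have "\<sigma> ! k \<noteq> Test j"
  proof
    assume "\<sigma> ! k = Test j"
    then obtain i where "i < n" "\<sigma> ! i = \<sigma> ! k"
      using sort_run_prefix_image(2)[OF run gap] j by (metis imageE image_eqI lessThan_iff)
    then have "\<sigma> ! k \<in> set (take k \<sigma>)"
      using \<open>n \<le> k\<close> \<open>k < 2 * n\<close> len by (auto simp: in_set_conv_nth intro!: exI[of _ i])
    with fresh show False ..
  qed
  then show ?thesis using j by auto
qed

lemma ALG_tests_first_uniform:
  assumes run: "sort_run \<beta> n t p \<sigma>" and gap: "\<forall>j<n. \<forall>j'<n. \<beta> * t j < p j'"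
    and uniform: "\<forall>j<n. p j = q"
  shows "ALG t p \<sigma> = real n * (\<Sum>j<n. t j) + q * (real n * (real n + 1) / 2)"
proof -
  have len: "length \<sigma> = 2 * n" using run unfolding sort_run_def by simp
  note tests = sort_run_prefix_test[OF run gap]
  note procs = sort_run_suffix_proc[OF run gap]
  define C where "C k = (if is_proc (\<sigma> ! k) then (\<Sum>i\<le>k. dur t p (\<sigma> ! i)) else 0)" for k
  define T where "T = (\<Sum>i<n. dur t p (\<sigma> ! i))"
  have T: "T = (\<Sum>j<n. t j)"
  proof -
    have "T = sum (dur t p) ((!) \<sigma> ` {..<n})"
      unfolding T_def by (simp add: sum.reindex[OF sort_run_prefix_image(1)[OF run gap]])
    also have "\<dots> = sum (dur t p) (Test ` {..<n})"
      by (simp add: sort_run_prefix_image(2)[OF run gap])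
    finally show ?thesis by (simp add: sum.reindex inj_on_def)
  qed
  have C_proc: "C (n + i) = T + (real i + 1) * q" if i: "i < n" for i
  proof -
    have "{..n + i} = {..<n + Suc i}" by auto
    then have "C (n + i) = T + (\<Sum>l<Suc i. dur t p (\<sigma> ! (n + l)))"
      unfolding C_def T_def using procs[of "n + i"] i sum_lessThan_add by auto
    also have "(\<Sum>l<Suc i. dur t p (\<sigma> ! (n + l))) = (\<Sum>l<Suc i. q)"
    proof (rule sum.cong)
      fix l assume "l \<in> {..<Suc i}"
      then obtain j where "j < n" "\<sigma> ! (n + l) = Proc j" using procs[of "n + l"] i by auto
      then show "dur t p (\<sigma> ! (n + l)) = q" using uniform by simp
    qed simp
    finally show ?thesis by simp
  qed
  have "ALG t p \<sigma> = (\<Sum>k<n. C k) + (\<Sum>i<n. C (n + i))"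
    unfolding ALG_def len C_def by (simp add: mult_2 sum_lessThan_add)
  also have "(\<Sum>k<n. C k) = 0"
    unfolding C_def using tests by (intro sum.neutral) force
  also have "(\<Sum>i<n. C (n + i)) = real n * T + q * (\<Sum>i<n. real i + 1)"
    by (simp add: C_proc sum.distrib sum_distrib_left[symmetric] mult.commute)
  finally show ?thesis by (simp add: T gauss_sum_lessThan_real)
qed

section \<open>Bounds on the offline optimum\<close>

lemma OPT_bounds:
  assumes feasible: "feasible_schedule n t p S"
  shows OPT_le_sched_cost: "OPT n t p \<le> sched_cost n p S"
    and sum_processing_le_OPT: "(\<Sum>j<n. p j) \<le> OPT n t p"
proof -
  have lower: "(\<Sum>j<n. p j) \<le> sched_cost n p S'" if "feasible_schedule n t p S'" for S'
  proof -
    have "\<And>j. j < n \<Longrightarrow> 0 \<le> S' (Proc j)"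
      using that unfolding feasible_schedule_def ops_def by auto
    then show ?thesis unfolding sched_cost_def by (intro sum_mono) auto
  qed
  then have "bdd_below {sched_cost n p S' | S'. feasible_schedule n t p S'}"
    by (auto simp: bdd_below_def)
  then show "OPT n t p \<le> sched_cost n p S"
    unfolding OPT_def using feasible by (intro cInf_lower) auto
  show "(\<Sum>j<n. p j) \<le> OPT n t p"
    unfolding OPT_def using feasible lower by (intro cInf_greatest) auto
qed

definition block_schedule :: "(nat \<Rightarrow> real) \<Rightarrow> (nat \<Rightarrow> real) \<Rightarrow> operation \<Rightarrow> real" where
  "block_schedule st t a = (case a of Test j \<Rightarrow> st j | Proc j \<Rightarrow> st j + t j)"

fun job :: "operation \<Rightarrow> nat" where
  "job (Test j) = j"
| "job (Proc j) = j"

lemma feasible_block_schedule: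
  assumes valid: "valid_instance n t p" and nonneg: "\<forall>j<n. 0 \<le> st j"
    and disjoint: "\<forall>j<n. \<forall>j'<n. j \<noteq> j' \<longrightarrow>
                      st j + t j + p j \<le> st j' \<or> st j' + t j' + p j' \<le> st j"
  shows "feasible_schedule n t p (block_schedule st t)"
proof -
  let ?S = "block_schedule st t"
  have in_block: "st (job a) \<le> ?S a \<and> ?S a + dur t p a \<le> st (job a) + t (job a) + p (job a)"
    if "a \<in> ops n" for a
    using that valid unfolding ops_def valid_instance_def by (auto simp: block_schedule_def)
  have job_less: "job a < n" if "a \<in> ops n" for a
    using that unfolding ops_def by auto
  have "?S a + dur t p a \<le> ?S b \<or> ?S b + dur t p b \<le> ?S a"
    if "a \<in> ops n" "b \<in> ops n" "a \<noteq> b" for a b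
  proof (cases "job a = job b")
    case True
    with \<open>a \<noteq> b\<close> obtain j where "a = Test j \<and> b = Proc j \<or> a = Proc j \<and> b = Test j"
      by (cases a; cases b) auto
    then show ?thesis by (auto simp: block_schedule_def)
  next
    case False
    then have "st (job a) + t (job a) + p (job a) \<le> st (job b) \<or>
               st (job b) + t (job b) + p (job b) \<le> st (job a)"
      using disjoint job_less that by blast
    then show ?thesis
      using in_block[OF that(1)] in_block[OF that(2)] by linarith
  qed
  moreover have "0 \<le> ?S a" if "a \<in> ops n" for a
    using that nonneg valid unfolding ops_def valid_instance_def
    by (auto simp: block_schedule_def)
  ultimately show ?thesis
    unfolding feasible_schedule_def by (auto simp: block_schedule_def)
qed

lemma sched_cost_block_schedule:
  "sched_cost n p (block_schedule st t) = (\<Sum>j<n. st j + t j + p j)"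
  by (simp add: sched_cost_def block_schedule_def)

section \<open>The lower-bound instance\<close>

definition unit_tests :: "nat \<Rightarrow> nat \<Rightarrow> real" where
  "unit_tests N j = (if j < N then 1 else 0)"

definition zero_tests_first :: "nat \<Rightarrow> nat \<Rightarrow> real \<Rightarrow> nat \<Rightarrow> real" where
  "zero_tests_first N M q j = (if j < N then real M * q + real j * (1 + q) else real (j - N) * q)"

lemma zero_tests_first_disjoint:
  assumes "0 \<le> q" and "j < N + M" and "j' < N + M" and "j < j'"
  defines "st \<equiv> zero_tests_first N M q" and "t \<equiv> unit_tests N"
  shows "st j + t j + q \<le> st j' \<or> st j' + t j' + q \<le> st j"
proof -
  consider "j' < N" | "N \<le> j" | "j < N" "N \<le> j'" by linarith
  then show ?thesis
  proof cases
    case 1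
    have "(real j + 1) * (1 + q) \<le> real j' * (1 + q)"
      using 1 \<open>j < j'\<close> \<open>0 \<le> q\<close> by (intro mult_right_mono) auto
    then show ?thesis using 1 \<open>j < j'\<close>
      by (simp add: st_def t_def zero_tests_first_def unit_tests_def algebra_simps)
  next
    case 2
    have "(real (j - N) + 1) * q \<le> real (j' - N) * q"
      using 2 \<open>j < j'\<close> \<open>0 \<le> q\<close> by (intro mult_right_mono) auto
    then show ?thesis using 2 \<open>j < j'\<close>
      by (simp add: st_def t_def zero_tests_first_def unit_tests_def algebra_simps)
  next
    case 3
    have "(real (j' - N) + 1) * q \<le> real M * q"
      using 3 \<open>j' < N + M\<close> \<open>0 \<le> q\<close> by (intro mult_right_mono) auto
    moreover have "0 \<le> real j * (1 + q)" using \<open>0 \<le> q\<close> by simp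
    ultimately show ?thesis using 3
      by (simp add: st_def t_def zero_tests_first_def unit_tests_def algebra_simps)
  qed
qed

lemma feasible_zero_tests_first:
  assumes "0 \<le> q"
  shows "feasible_schedule (N + M) (unit_tests N) (\<lambda>_. q)
           (block_schedule (zero_tests_first N M q) (unit_tests N))"
proof (rule feasible_block_schedule)
  show "valid_instance (N + M) (unit_tests N) (\<lambda>_. q)"
    using assms by (simp add: valid_instance_def unit_tests_def)
  show "\<forall>j<N + M. 0 \<le> zero_tests_first N M q j"
    using assms by (simp add: zero_tests_first_def)
  show "\<forall>j<N + M. \<forall>j'<N + M. j \<noteq> j' \<longrightarrow>
          zero_tests_first N M q j + unit_tests N j + q \<le> zero_tests_first N M q j' \<or>
          zero_tests_first N M q j' + unit_tests N j' + q \<le> zero_tests_first N M q j"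
    using zero_tests_first_disjoint[OF assms] by (metis linorder_neqE_nat)
qed

lemma sched_cost_zero_tests_first:
  "sched_cost (N + M) (\<lambda>_. q) (block_schedule (zero_tests_first N M q) (unit_tests N))
     = real N * real M * q + (1 + q) * (real N * (real N + 1) / 2) + q * (real M * (real M + 1) / 2)"
proof -
  let ?c = "\<lambda>j. zero_tests_first N M q j + unit_tests N j + q"
  have "sched_cost (N + M) (\<lambda>_. q) (block_schedule (zero_tests_first N M q) (unit_tests N))
          = (\<Sum>j<N. ?c j) + (\<Sum>i<M. ?c (N + i))"
    by (simp add: sched_cost_block_schedule sum_lessThan_add)
  also have "(\<Sum>j<N. ?c j) = (\<Sum>j<N. real M * q + (1 + q) * (real j + 1))"
    by (intro sum.cong) (auto simp: zero_tests_first_def unit_tests_def algebra_simps)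
  also have "\<dots> = real N * real M * q + (1 + q) * (\<Sum>j<N. real j + 1)"
    by (simp add: sum.distrib sum_distrib_left[symmetric])
  also have "(\<Sum>i<M. ?c (N + i)) = (\<Sum>i<M. q * (real i + 1))"
    by (intro sum.cong) (auto simp: zero_tests_first_def unit_tests_def algebra_simps)
  also have "\<dots> = q * (\<Sum>i<M. real i + 1)"
    by (simp add: sum_distrib_left)
  finally show ?thesis by (simp only: gauss_sum_lessThan_real)
qed

section \<open>The ratio estimate\<close>

lemma sort_ratio_root:
  fixes \<beta> :: real
  assumes "0 < \<beta>"
  defines "s \<equiv> (sqrt ((\<beta> + 4) / \<beta>) + 1) / 2"
  shows "\<beta> * s\<^sup>2 = \<beta> * s + 1" and "1 \<le> s"
proof -
  define w where "w = sqrt ((\<beta> + 4) / \<beta>)"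
  have "\<beta> * w\<^sup>2 = \<beta> + 4" unfolding w_def using assms by simp
  then show "\<beta> * s\<^sup>2 = \<beta> * s + 1"
    unfolding s_def w_def[symmetric] by (simp add: power2_eq_square algebra_simps)
  have "1 \<le> w" unfolding w_def using assms by (simp add: field_simps)
  then show "1 \<le> s" unfolding s_def w_def[symmetric] by simp
qed

text \<open>The leading terms: for K within distance 1 of s N, the ALG-term N K + \<beta> K^2 / 2
  exceeds s times the OPT-term (\<beta> K^2 + N^2) / 2 up to 1/2, because their difference
  is -(s - 1) \<beta> (K - s N)^2 / 2 and (s - 1) \<beta> = 1 / s.\<close>
lemma leading_terms_ratio:
  fixes \<beta> s N K :: real
  assumes "0 < \<beta>" and root: "\<beta> * s\<^sup>2 = \<beta> * s + 1" and "1 \<le> s" and close: "\<bar>K - s * N\<bar> \<le> 1"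
  shows "s * (\<beta> * K\<^sup>2 + N\<^sup>2) \<le> 2 * N * K + \<beta> * K\<^sup>2 + 1"
proof -
  have inv: "s * ((s - 1) * \<beta>) = 1" using root by (simp add: algebra_simps power2_eq_square)
  have diff: "s * (\<beta> * K\<^sup>2 + N\<^sup>2) - (2 * N * K + \<beta> * K\<^sup>2) = (s - 1) * \<beta> * (K - s * N)\<^sup>2"
  proof -
    have "(s - 1) * \<beta> * (K - s * N)\<^sup>2
          = (s - 1) * \<beta> * K\<^sup>2 - 2 * (s * ((s - 1) * \<beta>)) * N * K + s * (s * ((s - 1) * \<beta>)) * N\<^sup>2"
      by (simp add: algebra_simps power2_eq_square)
    then show ?thesis unfolding inv by (simp add: algebra_simps)
  qed
  have "0 \<le> (s - 1) * \<beta>" using assms by simp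
  then have "(s - 1) * \<beta> \<le> 1"
    using mult_right_mono[OF \<open>1 \<le> s\<close>, of "(s - 1) * \<beta>"] inv by simp
  moreover have "(K - s * N)\<^sup>2 \<le> 1"
  proof -
    have "\<bar>K - s * N\<bar>\<^sup>2 \<le> 1\<^sup>2" using close by (intro power_mono) auto
    then show ?thesis by simp
  qed
  ultimately have "(s - 1) * \<beta> * (K - s * N)\<^sup>2 \<le> 1"
    by (rule mult_le_one[OF _ zero_le_power2])
  then show ?thesis using diff by simp
qed

lemma ratio_estimate:
  fixes \<beta> s \<delta> q N M :: real
  assumes "0 < \<beta>" and root: "\<beta> * s\<^sup>2 = \<beta> * s + 1" and "1 \<le> s" and "0 < \<delta>"
    and N_large: "(1 + s + (2 + \<beta>) * s\<^sup>2) / \<delta> \<le> N" and "1 \<le> N" and "0 \<le> M"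
    and M_upper: "M \<le> (s - 1) * N" and M_lower: "(s - 1) * N - 1 < M"
    and q: "q = \<beta> + 1 / (N + M)\<^sup>2"
  defines "K \<equiv> N + M"
  shows "(s - \<delta>) * (N * M * q + (1 + q) * (N * (N + 1) / 2) + q * (M * (M + 1) / 2))
           \<le> K * N + q * (K * (K + 1) / 2)"
    (is "(s - \<delta>) * ?opt \<le> ?alg")
proof -
  have "1 \<le> K" using assms K_def by simp
  then have "1 / K\<^sup>2 \<le> 1" by (simp add: field_simps one_le_power)
  then have q_le: "q \<le> \<beta> + 1" using q K_def by simp
  have qK: "q * K\<^sup>2 = \<beta> * K\<^sup>2 + 1" using q K_def \<open>1 \<le> K\<close> by (simp add: field_simps)
  have "0 \<le> q" using q \<open>0 < \<beta>\<close> by simp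
  have opt_expand: "2 * ?opt = q * K\<^sup>2 + N\<^sup>2 + q * M + (1 + q) * N"
    by (simp add: K_def field_simps power2_eq_square)
  have "q * M + (1 + q) * N \<le> (2 + \<beta>) * K"
    using q_le \<open>0 \<le> M\<close> \<open>1 \<le> N\<close> \<open>0 \<le> q\<close> unfolding K_def
    by (smt (verit, best) mult_right_mono distrib_left)
  then have opt_upper: "2 * ?opt \<le> \<beta> * K\<^sup>2 + N\<^sup>2 + 1 + (2 + \<beta>) * K"
    using opt_expand qK by simp
  have opt_lower: "N\<^sup>2 \<le> 2 * ?opt"
    using opt_expand \<open>0 \<le> q\<close> \<open>0 \<le> M\<close> \<open>1 \<le> N\<close> by simp
  have alg_lower: "2 * N * K + \<beta> * K\<^sup>2 \<le> 2 * ?alg"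
  proof -
    have "\<beta> * K\<^sup>2 \<le> q * (K * (K + 1))"
      using qK \<open>1 \<le> K\<close> \<open>0 \<le> q\<close> by (simp add: power2_eq_square algebra_simps)
    then show ?thesis by (simp add: algebra_simps)
  qed
  have "\<bar>K - s * N\<bar> \<le> 1"
    using M_upper M_lower unfolding K_def by (simp add: algebra_simps abs_le_iff)
  then have leading: "s * (\<beta> * K\<^sup>2 + N\<^sup>2) \<le> 2 * N * K + \<beta> * K\<^sup>2 + 1"
    using leading_terms_ratio[OF \<open>0 < \<beta>\<close> root \<open>1 \<le> s\<close>] by blast
  text \<open>The error terms of order K are absorbed by \<delta> N^2, using K \<le> s N.\<close>
  have absorb: "1 + s + (2 + \<beta>) * s * K \<le> \<delta> * N\<^sup>2"
  proof -
    have "K \<le> s * N" using M_upper unfolding K_def by (simp add: algebra_simps)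
    then have "(2 + \<beta>) * s * K \<le> (2 + \<beta>) * s * (s * N)"
      using \<open>1 \<le> s\<close> \<open>0 < \<beta>\<close> by (intro mult_left_mono) auto
    then have "(2 + \<beta>) * s * K \<le> (2 + \<beta>) * s\<^sup>2 * N"
      by (simp add: power2_eq_square mult.assoc)
    moreover have "1 + s + (2 + \<beta>) * s\<^sup>2 * N \<le> (1 + s + (2 + \<beta>) * s\<^sup>2) * N"
      using mult_left_mono[OF \<open>1 \<le> N\<close>, of "1 + s"] \<open>1 \<le> s\<close> by (simp add: algebra_simps)
    moreover have "(1 + s + (2 + \<beta>) * s\<^sup>2) * N \<le> \<delta> * N * N"
      using N_large \<open>0 < \<delta>\<close> \<open>1 \<le> N\<close> by (intro mult_right_mono) (auto simp: field_simps)
    ultimately show ?thesis by (simp add: power2_eq_square)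
  qed
  have "s * (2 * ?opt) \<le> s * (\<beta> * K\<^sup>2 + N\<^sup>2) + s + (2 + \<beta>) * s * K"
    using mult_left_mono[OF opt_upper, of s] \<open>1 \<le> s\<close> by (simp add: algebra_simps)
  moreover have "\<delta> * N\<^sup>2 \<le> \<delta> * (2 * ?opt)"
    using opt_lower \<open>0 < \<delta>\<close> by simp
  moreover have "(s - \<delta>) * (2 * ?opt) = s * (2 * ?opt) - \<delta> * (2 * ?opt)"
    by (rule left_diff_distrib)
  ultimately have "(s - \<delta>) * (2 * ?opt) \<le> 2 * ?alg"
    using leading alg_lower absorb by linarith
  then have "2 * ((s - \<delta>) * ?opt) \<le> 2 * ?alg" by (metis mult.left_commute)
  then show ?thesis by (rule mult_left_le_imp_le) simp
qed

lemma unit_tests_instance: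
  fixes \<beta> q :: real and N M :: nat
  assumes "0 < \<beta>" and "\<beta> < q" and "0 < N"
  defines "t \<equiv> unit_tests N" and "p \<equiv> \<lambda>_. q"
  shows unit_tests_valid: "valid_instance (N + M) t p"
    and unit_tests_OPT_pos: "0 < OPT (N + M) t p"
    and unit_tests_OPT_le: "OPT (N + M) t p \<le> real N * real M * q
          + (1 + q) * (real N * (real N + 1) / 2) + q * (real M * (real M + 1) / 2)"
    and unit_tests_ALG: "sort_run \<beta> (N + M) t p \<sigma> \<Longrightarrow>
          ALG t p \<sigma> = real (N + M) * real N + q * (real (N + M) * (real (N + M) + 1) / 2)"
proof -
  show "valid_instance (N + M) t p"
    using assms unfolding valid_instance_def t_def p_def unit_tests_def by simp
  have feasible: "feasible_schedule (N + M) t p (block_schedule (zero_tests_first N M q) t)"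
    unfolding t_def p_def using assms by (intro feasible_zero_tests_first) simp
  show "OPT (N + M) t p \<le> real N * real M * q
          + (1 + q) * (real N * (real N + 1) / 2) + q * (real M * (real M + 1) / 2)"
    using OPT_le_sched_cost[OF feasible] sched_cost_zero_tests_first[of N M q]
    unfolding t_def p_def by simp
  have "0 < (\<Sum>j<N + M. p j)"
    unfolding p_def using assms by simp
  then show "0 < OPT (N + M) t p"
    using sum_processing_le_OPT[OF feasible] by linarith
  assume run: "sort_run \<beta> (N + M) t p \<sigma>"
  have gap: "\<forall>j<N + M. \<forall>j'<N + M. \<beta> * t j < p j'"
    unfolding t_def p_def unit_tests_def using assms by simp
  have "(\<Sum>j<N + M. t j) = real N"
    by (simp add: t_def unit_tests_def sum_lessThan_add)
  then show "ALG t p \<sigma> = real (N + M) * real N + q * (real (N + M) * (real (N + M) + 1) / 2)"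
    using ALG_tests_first_uniform[OF run gap] unfolding p_def by (simp add: mult.commute)
qed

lemma sort_lower_bound:
  fixes \<beta> \<delta> :: real
  assumes "0 < \<beta>" and "0 < \<delta>"
  shows "\<exists>n t p. valid_instance n t p \<and> 0 < OPT n t p \<and>
           (\<forall>\<sigma>. sort_run \<beta> n t p \<sigma> \<longrightarrow>
              ALG t p \<sigma> / OPT n t p \<ge> (sqrt ((\<beta> + 4) / \<beta>) + 1) / 2 - \<delta>)"
proof -
  define s where "s = (sqrt ((\<beta> + 4) / \<beta>) + 1) / 2"
  have root: "\<beta> * s\<^sup>2 = \<beta> * s + 1" and "1 \<le> s"
    using sort_ratio_root[OF \<open>0 < \<beta>\<close>] unfolding s_def by auto
  define N :: nat where "N = nat \<lceil>(1 + s + (2 + \<beta>) * s\<^sup>2) / \<delta>\<rceil> + 1"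
  define M :: nat where "M = nat \<lfloor>(s - 1) * real N\<rfloor>"
  define q where "q = \<beta> + 1 / (real N + real M)\<^sup>2"
  let ?t = "unit_tests N" and ?p = "\<lambda>_ :: nat. q"
  have "1 \<le> real N" and N_large: "(1 + s + (2 + \<beta>) * s\<^sup>2) / \<delta> \<le> real N"
    unfolding N_def by linarith+
  have "real M = of_int \<lfloor>(s - 1) * real N\<rfloor>"
    unfolding M_def using \<open>1 \<le> s\<close> by simp
  then have M_upper: "real M \<le> (s - 1) * real N" and M_lower: "(s - 1) * real N - 1 < real M"
    by linarith+
  have "\<beta> < q" and "0 < N" unfolding q_def using \<open>1 \<le> real N\<close> by simp_all
  note costs = unit_tests_instance[OF \<open>0 < \<beta>\<close> \<open>\<beta> < q\<close> \<open>0 < N\<close>, of M]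
  have "(s - \<delta>) * OPT (N + M) ?t ?p \<le> ALG ?t ?p \<sigma>" if "sort_run \<beta> (N + M) ?t ?p \<sigma>" for \<sigma>
  proof (cases "0 \<le> s - \<delta>")
    case True
    then show ?thesis
      using ratio_estimate[OF \<open>0 < \<beta>\<close> root \<open>1 \<le> s\<close> \<open>0 < \<delta>\<close> N_large \<open>1 \<le> real N\<close> _
          M_upper M_lower q_def]
        costs(3) costs(4)[OF that] mult_left_mono[OF costs(3) True]
      by simp
  next
    case False
    then have "(s - \<delta>) * OPT (N + M) ?t ?p < 0"
      using costs(2) by (simp add: mult_neg_pos)
    moreover have "0 \<le> ALG ?t ?p \<sigma>"
      using costs(4)[OF that] \<open>\<beta> < q\<close> \<open>0 < \<beta>\<close> by simp
    ultimately show ?thesis by linarith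
  qed
  then show ?thesis
    using costs(1,2) unfolding s_def
    by (intro exI[of _ "N + M"] exI[of _ ?t] exI[of _ ?p]) (simp add: pos_le_divide_eq)
qed

theorem mainTheorem12:
  shows "(\<forall>\<beta> \<delta> :: real. 0 < \<beta> \<and> \<beta> \<le> 1 \<and> 0 < \<delta> \<longrightarrow>
            (\<exists>n t p. valid_instance n t p \<and> 0 < OPT n t p \<and>
               (\<forall>\<sigma>. sort_run \<beta> n t p \<sigma> \<longrightarrow>
                  ALG t p \<sigma> / OPT n t p \<ge> (sqrt ((\<beta> + 4) / \<beta>) + 1) / 2 - \<delta>)))
       \<and> (\<forall>c :: real. c < (1 + sqrt 5) / 2 \<longrightarrow>
            (\<exists>n t p. valid_instance n t p \<and> 0 < OPT n t p \<and>
               (\<forall>\<sigma>. sort_run 1 n t p \<sigma> \<longrightarrow> ALG t p \<sigma> / OPT n t p > c)))"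
proof (intro conjI allI impI)
  fix \<beta> \<delta> :: real
  assume "0 < \<beta> \<and> \<beta> \<le> 1 \<and> 0 < \<delta>"
  then show "\<exists>n t p. valid_instance n t p \<and> 0 < OPT n t p \<and>
               (\<forall>\<sigma>. sort_run \<beta> n t p \<sigma> \<longrightarrow>
                  ALG t p \<sigma> / OPT n t p \<ge> (sqrt ((\<beta> + 4) / \<beta>) + 1) / 2 - \<delta>)"
    using sort_lower_bound by blast
next
  fix c :: real
  assume c: "c < (1 + sqrt 5) / 2"
  define \<delta> where "\<delta> = ((1 + sqrt 5) / 2 - c) / 2"
  have "0 < \<delta>" and "c < (sqrt ((1 + 4) / 1) + 1) / 2 - \<delta>"
    unfolding \<delta>_def using c by (simp_all add: field_simps)
  then show "\<exists>n t p. valid_instance n t p \<and> 0 < OPT n t p \<and>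
               (\<forall>\<sigma>. sort_run 1 n t p \<sigma> \<longrightarrow> ALG t p \<sigma> / OPT n t p > c)"
    using sort_lower_bound[of 1 \<delta>] by (meson less_le_trans zero_less_one)
qed

end
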